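(* Let $T$ be an order tree of height at most $\omega_1$ and $G$ a sparse $T$-graph. Then all the pairwise disjoint horizontal rays $R_t$ ($t\in T$) of the ray inflation $G\sharp\mathbb{N}$ belong to the same end $\varepsilon$, which is the only end of $G\sharp\mathbb{N}$; in particular $\deg(\varepsilon)=|T|$.
   Context: An order tree is a partial order $(T,\le)$ with a unique minimal element (the root) in which every set $\{t' : t'\le t\}$ is well-ordered; the height of $t$ is the order type of $\{t' : t'<t\}$; the height of $T$ is the supremum of the order types of its maximal chains. $t$ is a successor of $t'$ (its predecessor) if $t'<t$ with nothing strictly between; otherwise $t$ is a limit. A $T$-graph is a graph $G$ with $V(G)=T$ whose edges join comparable points and in which for every $t$ the neighbours of $t$ below $t$ (its down-neighbours) are cofinal in $\{s : s<t\}$. $G$ is sparse if the set of down-neighbours of each $t$ has order type $\mathrm{cf}(\{s : s<t\})$; for height at most $\omega_1$, this means a successor's only down-neighbour is its predecessor and a non-root limit's down-neighbours form a cofinal $\omega$-sequence below it. The ray inflation $G\sharp\mathbb{N}$ has vertex set $T\times\mathbb{N}$ and edges: $(t,n)(t,n+1)$ for all $t,n$ (so $R_t$, the subgraph on $\{t\}\times\mathbb{N}$, is a ray, the horizontal ray); $(t,n)(t',n)$ for all $n$ if $t$ is a successor with predecessor $t'$; $(t,n)(t_n,n)$ for all $n$ if $t$ is a non-root limit with down-neighbours $t_0<t_1<\cdots$. Ends are equivalence classes of rays, two rays being equivalent if there are infinitely many disjoint paths between them; the degree of an end is the maximum number of disjoint rays in it. *)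

theory Defs
  imports Main
begin

definition tlt :: "('a \<Rightarrow> 'a \<Rightarrow> bool) \<Rightarrow> 'a \<Rightarrow> 'a \<Rightarrow> bool" where
  "tlt le s t \<longleftrightarrow> le s t \<and> s \<noteq> t"

definition rel_on :: "('a \<Rightarrow> 'a \<Rightarrow> bool) \<Rightarrow> 'a set \<Rightarrow> 'a rel" where
  "rel_on le D = {(x, y). x \<in> D \<and> y \<in> D \<and> le x y}"

definition order_tree :: "'a set \<Rightarrow> ('a \<Rightarrow> 'a \<Rightarrow> bool) \<Rightarrow> bool" where
  "order_tree T le \<longleftrightarrow>
     (\<forall>x\<in>T. le x x) \<and>
     (\<forall>x\<in>T. \<forall>y\<in>T. le x y \<and> le y x \<longrightarrow> x = y) \<and>
     (\<forall>x\<in>T. \<forall>y\<in>T. \<forall>z\<in>T. le x y \<and> le y z \<longrightarrow> le x z) \<and>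
     (\<exists>!r. r \<in> T \<and> (\<forall>s\<in>T. le s r \<longrightarrow> s = r)) \<and>
     (\<forall>t\<in>T. well_order_on {s \<in> T. le s t} (rel_on le {s \<in> T. le s t}))"

definition tree_root :: "'a set \<Rightarrow> ('a \<Rightarrow> 'a \<Rightarrow> bool) \<Rightarrow> 'a" where
  "tree_root T le = (THE r. r \<in> T \<and> (\<forall>s\<in>T. le s r \<longrightarrow> s = r))"

definition is_chain :: "'a set \<Rightarrow> ('a \<Rightarrow> 'a \<Rightarrow> bool) \<Rightarrow> 'a set \<Rightarrow> bool" where
  "is_chain T le C \<longleftrightarrow> C \<subseteq> T \<and> (\<forall>x\<in>C. \<forall>y\<in>C. le x y \<or> le y x)"

definition maximal_chain :: "'a set \<Rightarrow> ('a \<Rightarrow> 'a \<Rightarrow> bool) \<Rightarrow> 'a set \<Rightarrow> bool" where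
  "maximal_chain T le C \<longleftrightarrow> is_chain T le C \<and> (\<forall>D. is_chain T le D \<and> C \<subseteq> D \<longrightarrow> D = C)"

text \<open>Height at most omega_1: the supremum of the order types of the maximal chains is at most
  omega_1, i.e. every maximal chain has order type at most omega_1 (= cardSuc natLeq).\<close>
definition height_le_omega1 :: "'a set \<Rightarrow> ('a \<Rightarrow> 'a \<Rightarrow> bool) \<Rightarrow> bool" where
  "height_le_omega1 T le \<longleftrightarrow>
     (\<forall>C. maximal_chain T le C \<longrightarrow> (rel_on le C, cardSuc natLeq) \<in> ordLeq)"

definition succ_of :: "'a set \<Rightarrow> ('a \<Rightarrow> 'a \<Rightarrow> bool) \<Rightarrow> 'a \<Rightarrow> 'a \<Rightarrow> bool" where
  "succ_of T le t t' \<longleftrightarrow> t \<in> T \<and> t' \<in> T \<and> tlt le t' t \<and>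
     \<not> (\<exists>s\<in>T. tlt le t' s \<and> tlt le s t)"

definition is_successor :: "'a set \<Rightarrow> ('a \<Rightarrow> 'a \<Rightarrow> bool) \<Rightarrow> 'a \<Rightarrow> bool" where
  "is_successor T le t \<longleftrightarrow> (\<exists>t'. succ_of T le t t')"

definition nonroot_limit :: "'a set \<Rightarrow> ('a \<Rightarrow> 'a \<Rightarrow> bool) \<Rightarrow> 'a \<Rightarrow> bool" where
  "nonroot_limit T le t \<longleftrightarrow> t \<in> T \<and> t \<noteq> tree_root T le \<and> \<not> is_successor T le t"

definition down_nbrs :: "'a set \<Rightarrow> ('a \<Rightarrow> 'a \<Rightarrow> bool) \<Rightarrow> ('a \<Rightarrow> 'a \<Rightarrow> bool) \<Rightarrow> 'a \<Rightarrow> 'a set" where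
  "down_nbrs T le E t = {u \<in> T. E t u \<and> tlt le u t}"

definition T_graph :: "'a set \<Rightarrow> ('a \<Rightarrow> 'a \<Rightarrow> bool) \<Rightarrow> ('a \<Rightarrow> 'a \<Rightarrow> bool) \<Rightarrow> bool" where
  "T_graph T le E \<longleftrightarrow>
     (\<forall>x y. E x y \<longrightarrow> E y x) \<and>
     (\<forall>x y. E x y \<longrightarrow> x \<in> T \<and> y \<in> T \<and> x \<noteq> y \<and> (le x y \<or> le y x)) \<and>
     (\<forall>t\<in>T. \<forall>s\<in>T. tlt le s t \<longrightarrow> (\<exists>u \<in> down_nbrs T le E t. le s u))"

text \<open>Sparseness, in the explicit form valid for trees of height at most omega_1:
  a successor's only down-neighbour is its predecessor, and the down-neighbours of a non-root
  limit form an omega-sequence (infinite, every element has only finitely many below it).\<close>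
definition sparse :: "'a set \<Rightarrow> ('a \<Rightarrow> 'a \<Rightarrow> bool) \<Rightarrow> ('a \<Rightarrow> 'a \<Rightarrow> bool) \<Rightarrow> bool" where
  "sparse T le E \<longleftrightarrow>
     (\<forall>t t'. succ_of T le t t' \<longrightarrow> down_nbrs T le E t = {t'}) \<and>
     (\<forall>t. nonroot_limit T le t \<longrightarrow>
        infinite (down_nbrs T le E t) \<and>
        (\<forall>u \<in> down_nbrs T le E t. finite {v \<in> down_nbrs T le E t. tlt le v u}))"

text \<open>The n-th down-neighbour t_n (counting from 0) of a non-root limit t.\<close>
definition nth_down :: "'a set \<Rightarrow> ('a \<Rightarrow> 'a \<Rightarrow> bool) \<Rightarrow> ('a \<Rightarrow> 'a \<Rightarrow> bool) \<Rightarrow> 'a \<Rightarrow> nat \<Rightarrow> 'a" where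
  "nth_down T le E t n =
     (THE u. u \<in> down_nbrs T le E t \<and> card {v \<in> down_nbrs T le E t. tlt le v u} = n)"

definition infl_base :: "'a set \<Rightarrow> ('a \<Rightarrow> 'a \<Rightarrow> bool) \<Rightarrow> ('a \<Rightarrow> 'a \<Rightarrow> bool) \<Rightarrow>
    'a \<times> nat \<Rightarrow> 'a \<times> nat \<Rightarrow> bool" where
  "infl_base T le E x y \<longleftrightarrow>
     fst x \<in> T \<and> fst y \<in> T \<and>
     ((fst y = fst x \<and> snd y = Suc (snd x)) \<or>
      (snd y = snd x \<and> succ_of T le (fst x) (fst y)) \<or>
      (snd y = snd x \<and> nonroot_limit T le (fst x) \<and> fst y = nth_down T le E (fst x) (snd x)))"

definition ray_inflation :: "'a set \<Rightarrow> ('a \<Rightarrow> 'a \<Rightarrow> bool) \<Rightarrow> ('a \<Rightarrow> 'a \<Rightarrow> bool) \<Rightarrow>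
    'a \<times> nat \<Rightarrow> 'a \<times> nat \<Rightarrow> bool" where
  "ray_inflation T le E x y \<longleftrightarrow> infl_base T le E x y \<or> infl_base T le E y x"

definition horiz_ray :: "'a \<Rightarrow> nat \<Rightarrow> 'a \<times> nat" where
  "horiz_ray t = (\<lambda>n. (t, n))"

definition is_ray :: "('v \<Rightarrow> 'v \<Rightarrow> bool) \<Rightarrow> (nat \<Rightarrow> 'v) \<Rightarrow> bool" where
  "is_ray H f \<longleftrightarrow> inj f \<and> (\<forall>n. H (f n) (f (Suc n)))"

definition is_path :: "('v \<Rightarrow> 'v \<Rightarrow> bool) \<Rightarrow> 'v list \<Rightarrow> bool" where
  "is_path H p \<longleftrightarrow> p \<noteq> [] \<and> distinct p \<and> (\<forall>i. Suc i < length p \<longrightarrow> H (p ! i) (p ! Suc i))"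

definition ray_equiv :: "('v \<Rightarrow> 'v \<Rightarrow> bool) \<Rightarrow> (nat \<Rightarrow> 'v) \<Rightarrow> (nat \<Rightarrow> 'v) \<Rightarrow> bool" where
  "ray_equiv H f g \<longleftrightarrow>
     (\<exists>P :: nat \<Rightarrow> 'v list.
        (\<forall>i. is_path H (P i) \<and> hd (P i) \<in> range f \<and> last (P i) \<in> range g) \<and>
        (\<forall>i j. i \<noteq> j \<longrightarrow> set (P i) \<inter> set (P j) = {}))"

definition end_of :: "('v \<Rightarrow> 'v \<Rightarrow> bool) \<Rightarrow> (nat \<Rightarrow> 'v) \<Rightarrow> (nat \<Rightarrow> 'v) set" where
  "end_of H f = {g. is_ray H g \<and> ray_equiv H f g}"

definition graph_ends :: "('v \<Rightarrow> 'v \<Rightarrow> bool) \<Rightarrow> (nat \<Rightarrow> 'v) set set" where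
  "graph_ends H = {end_of H f | f. is_ray H f}"

definition disjoint_rays :: "(nat \<Rightarrow> 'v) set \<Rightarrow> bool" where
  "disjoint_rays S \<longleftrightarrow> (\<forall>f\<in>S. \<forall>g\<in>S. f \<noteq> g \<longrightarrow> range f \<inter> range g = {})"

definition end_degree_is :: "(nat \<Rightarrow> 'v) set \<Rightarrow> 'b set \<Rightarrow> bool" where
  "end_degree_is eps K \<longleftrightarrow>
     (\<exists>S. S \<subseteq> eps \<and> disjoint_rays S \<and> (card_of S, card_of K) \<in> ordIso) \<and>
     (\<forall>S. S \<subseteq> eps \<and> disjoint_rays S \<longrightarrow> (card_of S, card_of K) \<in> ordLeq)"

end

theory Submission
  imports Defs
begin

text \<open>Let X be a finite set of vertices and N a level above all of them. A vertex outside the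
  columns of X below N can climb its column to some level M \<ge> N and then descend the tree at level
  M to the root, because every non-root point has a neighbour strictly below it at the same level
  and the points below a given one are well-ordered; the root column above N links all these
  vertices. So any two rays are joined by paths avoiding any finite set, hence by infinitely many
  disjoint paths, and there is only one end. The horizontal rays give |T| disjoint rays in it.
  Conversely, distinct disjoint rays have distinct first vertices in T \<times> \<nat>, which suffices for
  infinite T; for finite T a ray changes level by at most one per step, so disjoint rays meet a
  common level, which has only |T| vertices.\<close>

lemma nat_seq_hits_intermediate:
  fixes h :: "nat \<Rightarrow> nat"
  assumes step: "\<And>i. h (Suc i) \<le> Suc (h i)" and "h 0 \<le> m" and "m \<le> h n"
  shows "\<exists>i. h i = m"
  using \<open>m \<le> h n\<close>
proof (induction n)
  case 0
  then show ?case using \<open>h 0 \<le> m\<close> by (intro exI[of _ 0]) simp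
next
  case (Suc n)
  show ?case
  proof (cases "m \<le> h n")
    case True
    then show ?thesis using Suc.IH by blast
  next
    case False
    then show ?thesis using Suc.prems step[of n] by (intro exI[of _ "Suc n"]) simp
  qed
qed

locale omega_ordered =
  fixes D :: "'a set" and lt :: "'a \<Rightarrow> 'a \<Rightarrow> bool"
  assumes lt_trans: "\<lbrakk>x \<in> D; y \<in> D; z \<in> D; lt x y; lt y z\<rbrakk> \<Longrightarrow> lt x z"
    and lt_irrefl: "x \<in> D \<Longrightarrow> \<not> lt x x"
    and lt_total: "\<lbrakk>x \<in> D; y \<in> D; x \<noteq> y\<rbrakk> \<Longrightarrow> lt x y \<or> lt y x"
    and infinite_D: "infinite D"
    and finite_below: "u \<in> D \<Longrightarrow> finite {v \<in> D. lt v u}"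
begin

definition rank :: "'a \<Rightarrow> nat" where
  "rank u = card {v \<in> D. lt v u}"

lemma rank_less:
  assumes "u \<in> D" "w \<in> D" "lt u w"
  shows "rank u < rank w"
proof -
  have "{v \<in> D. lt v u} \<subset> {v \<in> D. lt v w}"
    using assms lt_trans lt_irrefl by blast
  then show ?thesis
    unfolding rank_def using finite_below[OF \<open>w \<in> D\<close>] by (rule psubset_card_mono[rotated])
qed

lemma inj_on_rank: "inj_on rank D"
  by (rule inj_onI) (metis lt_total rank_less less_irrefl)

lemma rank_image_below:
  assumes "w \<in> D"
  shows "rank ` {v \<in> D. lt v w} = {..<rank w}"
proof (rule card_subset_eq)
  show "rank ` {v \<in> D. lt v w} \<subseteq> {..<rank w}"
    using rank_less assms by auto
  have "inj_on rank {v \<in> D. lt v w}"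
    using inj_on_rank by (rule inj_on_subset) blast
  then show "card (rank ` {v \<in> D. lt v w}) = card {..<rank w}"
    by (metis card_image card_lessThan rank_def)
qed simp

lemma ex1_rank_eq: "\<exists>!u. u \<in> D \<and> rank u = m"
proof -
  have "infinite (rank ` D)"
    using infinite_D inj_on_rank finite_imageD by blast
  then obtain w where "w \<in> D" "m < rank w"
    unfolding finite_nat_set_iff_bounded_le by (auto simp: not_le)
  then have "m \<in> rank ` {v \<in> D. lt v w}"
    by (simp add: rank_image_below)
  then obtain u where "u \<in> D" "rank u = m"
    by blast
  with inj_on_rank show ?thesis
    by (metis inj_onD)
qed

end

lemma order_tree_refl: "\<lbrakk>order_tree T le; x \<in> T\<rbrakk> \<Longrightarrow> le x x"
  unfolding order_tree_def by blast

lemma order_tree_antisym: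
  "\<lbrakk>order_tree T le; x \<in> T; y \<in> T; le x y; le y x\<rbrakk> \<Longrightarrow> x = y"
  unfolding order_tree_def by blast

lemma order_tree_trans:
  "\<lbrakk>order_tree T le; x \<in> T; y \<in> T; z \<in> T; le x y; le y z\<rbrakk> \<Longrightarrow> le x z"
  unfolding order_tree_def by blast

lemma tree_root_in:
  assumes "order_tree T le"
  shows "tree_root T le \<in> T"
proof -
  have "\<exists>!r. r \<in> T \<and> (\<forall>s\<in>T. le s r \<longrightarrow> s = r)"
    using assms unfolding order_tree_def by (elim conjE)
  from theI'[OF this] show ?thesis
    unfolding tree_root_def by (rule conjunct1)
qed

lemma well_order_below:
  "\<lbrakk>order_tree T le; t \<in> T\<rbrakk> \<Longrightarrow> well_order_on {s \<in> T. le s t} (rel_on le {s \<in> T. le s t})"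
  unfolding order_tree_def by blast

lemma order_tree_below_total:
  assumes ot: "order_tree T le" and "t \<in> T" "u \<in> T" "w \<in> T" "le u t" "le w t"
  shows "le u w \<or> le w u"
proof (cases "u = w")
  case False
  have "total_on {s \<in> T. le s t} (rel_on le {s \<in> T. le s t})"
    using well_order_below[OF ot \<open>t \<in> T\<close>] unfolding well_order_on_def linear_order_on_def by blast
  with False show ?thesis
    using assms(3-6) unfolding total_on_def rel_on_def by auto
qed (use order_tree_refl[OF ot \<open>u \<in> T\<close>] in simp)

lemma wf_below:
  assumes "order_tree T le" and "t \<in> T"
  shows "wf (rel_on le {s \<in> T. le s t} - Id)"
  using well_order_below[OF assms] unfolding well_order_on_def by blast

lemma nth_down_below:
  assumes ot: "order_tree T le" and sp: "sparse T le E" and lim: "nonroot_limit T le t"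
  shows "nth_down T le E t m \<in> T \<and> tlt le (nth_down T le E t m) t"
proof -
  let ?D = "down_nbrs T le E t"
  have "t \<in> T"
    using lim unfolding nonroot_limit_def by blast
  have D_below: "u \<in> T \<and> tlt le u t" if "u \<in> ?D" for u
    using that unfolding down_nbrs_def by blast
  interpret omega_ordered ?D "tlt le"
  proof
    show "tlt le x z" if "x \<in> ?D" "y \<in> ?D" "z \<in> ?D" "tlt le x y" "tlt le y z" for x y z
      using that D_below order_tree_trans[OF ot] order_tree_antisym[OF ot]
      unfolding tlt_def by metis
    show "tlt le x y \<or> tlt le y x" if "x \<in> ?D" "y \<in> ?D" "x \<noteq> y" for x y
      using that D_below order_tree_below_total[OF ot \<open>t \<in> T\<close>] unfolding tlt_def by metis
  qed (use sp lim in \<open>auto simp: sparse_def tlt_def\<close>)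
  have "nth_down T le E t m \<in> ?D"
    unfolding nth_down_def using theI'[OF ex1_rank_eq[of m]] by (simp add: rank_def)
  then show ?thesis
    using D_below by blast
qed

lemma ray_inflation_down_edge:
  assumes ot: "order_tree T le" and sp: "sparse T le E"
    and "t \<in> T" and "t \<noteq> tree_root T le"
  obtains s where "s \<in> T" "tlt le s t" "ray_inflation T le E (t, m) (s, m)"
proof (cases "is_successor T le t")
  case True
  then obtain s where s: "succ_of T le t s"
    unfolding is_successor_def by blast
  then have "infl_base T le E (t, m) (s, m)"
    unfolding infl_base_def succ_of_def by simp
  with s show ?thesis
    using that unfolding succ_of_def ray_inflation_def by blast
next
  case False
  then have lim: "nonroot_limit T le t"
    using assms(3,4) unfolding nonroot_limit_def by blast
  let ?s = "nth_down T le E t m"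
  have "infl_base T le E (t, m) (?s, m)"
    using lim nth_down_below[OF ot sp lim] \<open>t \<in> T\<close> unfolding infl_base_def by simp
  then show ?thesis
    using that nth_down_below[OF ot sp lim] unfolding ray_inflation_def by blast
qed

definition avoiding :: "('v \<Rightarrow> 'v \<Rightarrow> bool) \<Rightarrow> 'v set \<Rightarrow> 'v \<Rightarrow> 'v \<Rightarrow> bool" where
  "avoiding H X x y \<longleftrightarrow> H x y \<and> x \<notin> X \<and> y \<notin> X"

lemma symp_avoiding: "symp H \<Longrightarrow> symp (avoiding H X)"
  unfolding symp_def avoiding_def by blast

lemma symp_ray_inflation: "symp (ray_inflation T le E)"
  unfolding symp_def ray_inflation_def by blast

lemma avoiding_ray_inflation_rtranclp_sym:
  "(avoiding (ray_inflation T le E) X)\<^sup>*\<^sup>* x y \<Longrightarrow> (avoiding (ray_inflation T le E) X)\<^sup>*\<^sup>* y x"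
  by (rule sympD[OF symp_rtranclp[OF symp_avoiding[OF symp_ray_inflation]]])

lemma descend_to_root:
  assumes ot: "order_tree T le" and sp: "sparse T le E"
    and level_free: "\<forall>s\<in>T. (s, M) \<notin> X" and "t \<in> T"
  shows "(avoiding (ray_inflation T le E) X)\<^sup>*\<^sup>* (t, M) (tree_root T le, M)"
proof -
  let ?A = "{s \<in> T. le s t}"
  let ?R = "(avoiding (ray_inflation T le E) X)\<^sup>*\<^sup>*"
  have to_root: "s \<in> ?A \<longrightarrow> ?R (s, M) (tree_root T le, M)" for s
  proof (induction s rule: wf_induct_rule[OF wf_below[OF ot \<open>t \<in> T\<close>]])
    case (1 s)
    show ?case
    proof (intro impI)
      assume "s \<in> ?A"
      show "?R (s, M) (tree_root T le, M)"
      proof (cases "s = tree_root T le")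
        case False
        then obtain s' where s': "s' \<in> T" "tlt le s' s" "ray_inflation T le E (s, M) (s', M)"
          using ray_inflation_down_edge[OF ot sp _ False] \<open>s \<in> ?A\<close> by blast
        then have "s' \<in> ?A"
          using order_tree_trans[OF ot, of s' s t] \<open>s \<in> ?A\<close> \<open>t \<in> T\<close> unfolding tlt_def by auto
        then have "?R (s', M) (tree_root T le, M)"
          using "1" \<open>s \<in> ?A\<close> s' unfolding rel_on_def tlt_def by auto
        moreover have "avoiding (ray_inflation T le E) X (s, M) (s', M)"
          using s' \<open>s \<in> ?A\<close> level_free unfolding avoiding_def by auto
        ultimately show ?thesis
          by (rule converse_rtranclp_into_rtranclp[rotated])
      qed simp
    qed
  qed
  have "t \<in> ?A"
    using order_tree_refl[OF ot \<open>t \<in> T\<close>] \<open>t \<in> T\<close> by simp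
  with to_root show ?thesis
    by (rule mp)
qed

lemma move_in_column:
  assumes "t \<in> T" and column_free: "\<forall>j \<ge> min a b. (t, j) \<notin> X"
  shows "(avoiding (ray_inflation T le E) X)\<^sup>*\<^sup>* (t, a) (t, b)"
proof -
  let ?R = "(avoiding (ray_inflation T le E) X)\<^sup>*\<^sup>*"
  have up: "?R (t, i) (t, i + d)" if "min a b \<le> i" for i d
  proof (induction d)
    case (Suc d)
    have "avoiding (ray_inflation T le E) X (t, i + d) (t, Suc (i + d))"
      using \<open>t \<in> T\<close> column_free that unfolding avoiding_def ray_inflation_def infl_base_def by auto
    with Suc show ?case
      by simp
  qed simp
  show ?thesis
  proof (cases "a \<le> b")
    case True
    then show ?thesis
      using up[of a "b - a"] by simp
  next
    case False
    then show ?thesis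
      using up[of b "a - b"] avoiding_ray_inflation_rtranclp_sym by simp
  qed
qed

lemma connected_to_root_level:
  assumes ot: "order_tree T le" and sp: "sparse T le E" and "t \<in> T"
    and N: "\<forall>x\<in>X. snd x < N" and outside: "(t, k) \<notin> fst ` X \<times> {..<N}"
  shows "(avoiding (ray_inflation T le E) X)\<^sup>*\<^sup>* (t, k) (tree_root T le, N)"
proof -
  let ?R = "(avoiding (ray_inflation T le E) X)\<^sup>*\<^sup>*"
  define M where "M = max k N"
  have high_free: "(s, j) \<notin> X" if "N \<le> j" for s j
    using N that by fastforce
  have "(t, j) \<notin> X" if "k \<le> j" for j
    using outside that high_free by (force simp: image_iff)
  then have "?R (t, k) (t, M)"
    using \<open>t \<in> T\<close> by (intro move_in_column) (auto simp: M_def)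
  also have "?R (t, M) (tree_root T le, M)"
    using high_free by (intro descend_to_root[OF ot sp _ \<open>t \<in> T\<close>]) (simp add: M_def)
  also have "?R (tree_root T le, M) (tree_root T le, N)"
    using high_free by (intro move_in_column tree_root_in[OF ot]) (auto simp: M_def)
  finally show ?thesis .
qed

lemma is_path_take: "\<lbrakk>is_path H p; 0 < n\<rbrakk> \<Longrightarrow> is_path H (take n p)"
  unfolding is_path_def by auto

lemma is_path_snoc:
  assumes "is_path H p" "H (last p) x" "x \<notin> set p"
  shows "is_path H (p @ [x])"
  unfolding is_path_def
proof (intro conjI allI impI)
  show "p @ [x] \<noteq> []" "distinct (p @ [x])"
    using assms(1,3) unfolding is_path_def by auto
  fix i assume i: "Suc i < length (p @ [x])"
  show "H ((p @ [x]) ! i) ((p @ [x]) ! Suc i)"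
  proof (cases "Suc i < length p")
    case True
    then show ?thesis
      using assms(1) unfolding is_path_def by (simp add: nth_append)
  next
    case False
    with i have "i = length p - 1" "p \<noteq> []"
      by auto
    then show ?thesis
      using assms(2) by (simp add: nth_append last_conv_nth)
  qed
qed

lemma path_avoiding_if_rtranclp:
  assumes "(avoiding H X)\<^sup>*\<^sup>* a b" and "a \<notin> X"
  shows "\<exists>p. is_path H p \<and> hd p = a \<and> last p = b \<and> set p \<inter> X = {}"
  using assms
proof (induction rule: rtranclp_induct)
  case base
  then show ?case
    by (intro exI[of _ "[a]"]) (simp add: is_path_def)
next
  case (step c d)
  then obtain p where p: "is_path H p" "hd p = a" "last p = c" "set p \<inter> X = {}"
    by blast
  have "H c d" "d \<notin> X"
    using step.hyps(2) unfolding avoiding_def by auto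
  show ?case
  proof (cases "d \<in> set p")
    case True
    then obtain i where i: "i < length p" "p ! i = d"
      by (auto simp: in_set_conv_nth)
    let ?q = "take (Suc i) p"
    have "is_path H ?q"
      using is_path_take[OF p(1)] by simp
    moreover have "hd ?q = a"
      using p(2) by simp
    moreover have "last ?q = d"
      using i by (simp add: take_Suc_conv_app_nth)
    moreover have "set ?q \<inter> X = {}"
      using p(4) set_take_subset[of "Suc i" p] by blast
    ultimately show ?thesis
      by blast
  next
    case False
    then have "is_path H (p @ [d])"
      using p(3) \<open>H c d\<close> by (intro is_path_snoc[OF p(1)]) simp_all
    moreover have "hd (p @ [d]) = a"
      using p(1,2) unfolding is_path_def by simp
    ultimately show ?thesis
      using p(4) \<open>d \<notin> X\<close> by (intro exI[of _ "p @ [d]"]) auto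
  qed
qed

text \<open>Greedy construction: each new path avoids the finitely many vertices used so far.\<close>
lemma ray_equiv_if_paths_avoid_finite:
  assumes paths: "\<And>X. finite X \<Longrightarrow>
    \<exists>p. is_path H p \<and> hd p \<in> range f \<and> last p \<in> range g \<and> set p \<inter> X = {}"
  shows "ray_equiv H f g"
proof -
  define good where "good X p \<longleftrightarrow>
    is_path H p \<and> hd p \<in> range f \<and> last p \<in> range g \<and> set p \<inter> X = {}" for X p
  define next_path where "next_path X = (SOME p. good X p)" for X
  define used where "used = rec_nat {} (\<lambda>_ X. X \<union> set (next_path X))"
  have used_simps: "used 0 = {}" "used (Suc n) = used n \<union> set (next_path (used n))" for n
    unfolding used_def by simp_all
  have "finite (used n)" for n
    by (induction n) (simp_all add: used_simps)
  then have good_next: "good (used n) (next_path (used n))" for n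
    unfolding next_path_def good_def by (rule someI_ex[OF paths])
  have "set (next_path (used i)) \<inter> set (next_path (used j)) = {}" if "i < j" for i j
  proof -
    have "set (next_path (used i)) \<subseteq> used (Suc i)"
      by (simp add: used_simps)
    also have "\<dots> \<subseteq> used j"
      by (rule lift_Suc_mono_le) (use that in \<open>auto simp: used_simps\<close>)
    finally show ?thesis
      using good_next[of j] unfolding good_def by blast
  qed
  then have "set (next_path (used i)) \<inter> set (next_path (used j)) = {}" if "i \<noteq> j" for i j
    using that by (metis Int_commute linorder_neqE_nat)
  with good_next show ?thesis
    unfolding ray_equiv_def good_def by (intro exI[of _ "\<lambda>i. next_path (used i)"]) blast
qed

lemma ray_inflation_fst_in: "ray_inflation T le E x y \<Longrightarrow> fst x \<in> T"
  unfolding ray_inflation_def infl_base_def by blast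

lemma ray_inflation_level_step: "ray_inflation T le E x y \<Longrightarrow> snd y \<le> Suc (snd x)"
  unfolding ray_inflation_def infl_base_def by auto

lemma is_ray_fst_in: "is_ray (ray_inflation T le E) f \<Longrightarrow> fst (f n) \<in> T"
  unfolding is_ray_def using ray_inflation_fst_in by blast

lemma ray_leaves_finite:
  assumes "is_ray H f" and "finite F"
  obtains n where "f n \<notin> F"
proof -
  have "infinite (range f)"
    using assms(1) unfolding is_ray_def using finite_imageD by blast
  then have "\<not> range f \<subseteq> F"
    using assms(2) by (meson finite_subset)
  then show ?thesis
    using that by blast
qed

lemma ray_inflation_paths_avoid_finite:
  assumes ot: "order_tree T le" and sp: "sparse T le E" and "finite X"
    and f: "is_ray (ray_inflation T le E) f" and g: "is_ray (ray_inflation T le E) g"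
  shows "\<exists>p. is_path (ray_inflation T le E) p \<and> hd p \<in> range f \<and> last p \<in> range g \<and> set p \<inter> X = {}"
proof -
  let ?R = "(avoiding (ray_inflation T le E) X)\<^sup>*\<^sup>*"
  obtain N where N: "\<forall>x\<in>X. snd x < N"
    using \<open>finite X\<close> finite_nat_set_iff_bounded[of "snd ` X"] by auto
  let ?F = "fst ` X \<times> {..<N}"
  have "X \<subseteq> ?F"
    using N by force
  have "finite ?F"
    using \<open>finite X\<close> by simp
  have to_root: "?R (h n) (tree_root T le, N)"
    if "is_ray (ray_inflation T le E) h" "h n \<notin> ?F" for h n
    using connected_to_root_level[OF ot sp is_ray_fst_in[OF that(1), of n] N, of "snd (h n)"] that(2)
    by simp
  obtain n where n: "f n \<notin> ?F"
    using ray_leaves_finite[OF f \<open>finite ?F\<close>] .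
  obtain n' where n': "g n' \<notin> ?F"
    using ray_leaves_finite[OF g \<open>finite ?F\<close>] .
  have "?R (f n) (g n')"
    using to_root[OF f n] avoiding_ray_inflation_rtranclp_sym[OF to_root[OF g n']] by simp
  moreover have "f n \<notin> X"
    using n \<open>X \<subseteq> ?F\<close> by blast
  ultimately show ?thesis
    by (blast dest: path_avoiding_if_rtranclp)
qed

lemma ray_inflation_rays_equiv:
  assumes "order_tree T le" and "sparse T le E"
    and "is_ray (ray_inflation T le E) f" and "is_ray (ray_inflation T le E) g"
  shows "ray_equiv (ray_inflation T le E) f g"
  using ray_inflation_paths_avoid_finite[OF assms(1,2) _ assms(3,4)]
  by (rule ray_equiv_if_paths_avoid_finite)

lemma graph_ends_eq_singleton:
  assumes "is_ray H r" and "\<And>f g. \<lbrakk>is_ray H f; is_ray H g\<rbrakk> \<Longrightarrow> ray_equiv H f g"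
  shows "graph_ends H = {{g. is_ray H g}}"
proof -
  have "end_of H f = {g. is_ray H g}" if "is_ray H f" for f
    unfolding end_of_def using assms(2)[OF that] by blast
  then show ?thesis
    unfolding graph_ends_def using assms(1) by blast
qed

lemma inj_on_disjoint_rays:
  assumes "disjoint_rays S" and "\<And>f. f \<in> S \<Longrightarrow> \<phi> f \<in> range f"
  shows "inj_on \<phi> S"
proof (rule inj_onI)
  fix f g
  assume "f \<in> S" "g \<in> S" "\<phi> f = \<phi> g"
  then have "\<phi> f \<in> range f \<inter> range g"
    using assms(2) by (metis IntI)
  then show "f = g"
    using assms(1) \<open>f \<in> S\<close> \<open>g \<in> S\<close> unfolding disjoint_rays_def by blast
qed

lemma ray_inflation_ray_hits_level:
  assumes f: "is_ray (ray_inflation T le E) f" and "finite T" and "snd (f 0) \<le> m"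
  shows "\<exists>n. snd (f n) = m"
proof -
  have "finite (T \<times> {..<m})"
    using \<open>finite T\<close> by simp
  then obtain n where "f n \<notin> T \<times> {..<m}"
    by (rule ray_leaves_finite[OF f])
  then have "m \<le> snd (f n)"
    using is_ray_fst_in[OF f, of n] by (cases "f n") auto
  moreover have "snd (f (Suc i)) \<le> Suc (snd (f i))" for i
    using f ray_inflation_level_step unfolding is_ray_def by blast
  ultimately show ?thesis
    using nat_seq_hits_intermediate[of "\<lambda>i. snd (f i)" m n] \<open>snd (f 0) \<le> m\<close> by simp
qed

text \<open>Every ray of S passes through the level m above all starting points, and a level has only
  card T vertices.\<close>
lemma card_disjoint_rays_ray_inflation_le:
  assumes "finite T" and "finite S" and rays: "\<And>f. f \<in> S \<Longrightarrow> is_ray (ray_inflation T le E) f"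
    and "disjoint_rays S"
  shows "card S \<le> card T"
proof -
  define m where "m = Max ((\<lambda>f. snd (f 0)) ` S)"
  define \<phi> where "\<phi> f = f (SOME n. snd (f n) = m)" for f :: "nat \<Rightarrow> 'a \<times> nat"
  have \<phi>: "\<phi> f \<in> range f \<and> \<phi> f \<in> T \<times> {m}" if fS: "f \<in> S" for f
  proof -
    have "snd (f 0) \<le> m"
      unfolding m_def using \<open>finite S\<close> fS by (intro Max_ge) auto
    then obtain n where "snd (f n) = m"
      using ray_inflation_ray_hits_level[OF rays[OF fS] \<open>finite T\<close>] by blast
    then have "snd (\<phi> f) = m"
      unfolding \<phi>_def by (rule someI)
    moreover have "fst (\<phi> f) \<in> T"
      unfolding \<phi>_def by (rule is_ray_fst_in[OF rays[OF fS]])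
    moreover have "\<phi> f \<in> range f"
      unfolding \<phi>_def by (rule rangeI)
    ultimately show ?thesis
      by (simp add: mem_Times_iff)
  qed
  have "inj_on \<phi> S"
    using \<open>disjoint_rays S\<close> by (rule inj_on_disjoint_rays) (use \<phi> in blast)
  moreover have "\<phi> ` S \<subseteq> T \<times> {m}"
    using \<phi> by blast
  moreover have "finite (T \<times> {m})"
    using \<open>finite T\<close> by simp
  ultimately have "card S \<le> card (T \<times> {m})"
    by (rule card_inj_on_le)
  then show ?thesis
    by (simp add: card_cartesian_product)
qed

lemma card_of_disjoint_rays_ray_inflation_le:
  assumes rays: "\<And>f. f \<in> S \<Longrightarrow> is_ray (ray_inflation T le E) f" and "disjoint_rays S"
  shows "(card_of S, card_of T) \<in> ordLeq"
proof (cases "finite T")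
  case False
  have "inj_on (\<lambda>f. f 0) S"
    using \<open>disjoint_rays S\<close> by (rule inj_on_disjoint_rays) simp
  moreover have "(\<lambda>f. f 0) ` S \<subseteq> T \<times> (UNIV :: nat set)"
    by (intro image_subsetI) (simp add: mem_Times_iff is_ray_fst_in[OF rays])
  ultimately have "(card_of S, card_of (T \<times> (UNIV :: nat set))) \<in> ordLeq"
    using card_of_ordLeq by blast
  moreover have "(card_of (T \<times> (UNIV :: nat set)), card_of T) \<in> ordIso"
    using False infinite_iff_card_of_nat by (intro card_of_Times_infinite_simps(1)) auto
  ultimately show ?thesis
    using ordLeq_ordIso_trans by blast
next
  case True
  have disjoint_subsets: "disjoint_rays S'" if "S' \<subseteq> S" for S'
    using \<open>disjoint_rays S\<close> that unfolding disjoint_rays_def by blast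
  have "finite S"
  proof (rule ccontr)
    assume "infinite S"
    then obtain S' where "S' \<subseteq> S" "finite S'" "card S' = Suc (card T)"
      using infinite_arbitrarily_large by blast
    then show False
      using card_disjoint_rays_ray_inflation_le[OF True _ _ disjoint_subsets] rays
      by (metis Suc_n_not_le_n subsetD)
  qed
  then have "card S \<le> card T"
    using card_disjoint_rays_ray_inflation_le[OF True _ rays \<open>disjoint_rays S\<close>] by blast
  then obtain h where "inj_on h S" "h ` S \<subseteq> T"
    using card_le_inj \<open>finite S\<close> True by blast
  then show ?thesis
    using card_of_ordLeq by blast
qed

lemma is_ray_horiz_ray: "t \<in> T \<Longrightarrow> is_ray (ray_inflation T le E) (horiz_ray t)"
  unfolding is_ray_def horiz_ray_def ray_inflation_def infl_base_def inj_def by auto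

lemma inj_horiz_ray: "inj horiz_ray"
  by (rule injI) (simp add: horiz_ray_def fun_eq_iff)

lemma disjoint_rays_horiz_ray: "disjoint_rays (horiz_ray ` A)"
  unfolding disjoint_rays_def horiz_ray_def by auto

lemma card_of_horiz_rays: "(card_of (horiz_ray ` A), card_of A) \<in> ordIso"
proof -
  have "inj_on horiz_ray A"
    using inj_horiz_ray by (rule inj_on_subset) simp
  then have "bij_betw horiz_ray A (horiz_ray ` A)"
    by (rule inj_on_imp_bij_betw)
  then have "(card_of A, card_of (horiz_ray ` A)) \<in> ordIso"
    by (rule card_of_ordIso[THEN iffD1, OF exI])
  then show ?thesis
    by (rule ordIso_symmetric)
qed

theorem lemma6p2:
  fixes T :: "'a set" and le :: "'a \<Rightarrow> 'a \<Rightarrow> bool" and E :: "'a \<Rightarrow> 'a \<Rightarrow> bool"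
  assumes "order_tree T le"
    and "height_le_omega1 T le"
    and "T_graph T le E"
    and "sparse T le E"
  shows "\<exists>eps \<in> graph_ends (ray_inflation T le E).
           graph_ends (ray_inflation T le E) = {eps} \<and>
           (\<forall>t\<in>T. horiz_ray t \<in> eps) \<and>
           disjoint_rays (horiz_ray ` T) \<and>
           end_degree_is eps T"
proof -
  let ?H = "ray_inflation T le E"
  define eps where "eps = {g. is_ray ?H g}"
  have ends: "graph_ends ?H = {eps}"
    unfolding eps_def
    using is_ray_horiz_ray[OF tree_root_in[OF assms(1)]] ray_inflation_rays_equiv[OF assms(1,4)]
    by (rule graph_ends_eq_singleton)
  have horiz_in: "horiz_ray ` T \<subseteq> eps"
    unfolding eps_def using is_ray_horiz_ray[of _ T le E] by blast
  have "(card_of S, card_of T) \<in> ordLeq" if "S \<subseteq> eps" "disjoint_rays S" for S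
    using that card_of_disjoint_rays_ray_inflation_le[of S T le E] unfolding eps_def by blast
  with card_of_horiz_rays[of T] have "end_degree_is eps T"
    unfolding end_degree_is_def using horiz_in disjoint_rays_horiz_ray by blast
  with ends horiz_in show ?thesis
    using disjoint_rays_horiz_ray by (intro bexI[of _ eps]) auto
qed

end
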